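(* Let $K$ be a twisted knot diagram with an even number of bars, and consider colorings of $K$ by the twisted biquandle $(\mathbb{Z}_{S(K)},\ a\ast b=a\circ b=a+1,\ f(a)=-a)$ (with $\mathbb{Z}_0=\mathbb{Z}$). For a coloring $F$ and a real crossing $c$ let $\mathrm{Ind}_F(c)=y-x\in\mathbb{Z}_{S(K)}$. Then: (i) if $c\in C_e(K)$, $\mathrm{Ind}_F(c)$ does not depend on the coloring $F$; (ii) if $c\in C_o(K)$, then as $F$ ranges over all colorings, the set of values $\{\mathrm{Ind}_F(c)\}$ is exactly the set of all even elements or exactly the set of all odd elements of $\mathbb{Z}_{S(K)}$.
   Context: A twisted knot diagram is a virtual knot diagram with finitely many bars on its edges. With $2n$ bars cutting $K$ into edges $e_1,\dots,e_{2n}$ (consecutive along the orientation), $s(e)=u_+(e)+o_-(e)-u_-(e)-o_+(e)$ where $o_\pm(e)$ (resp. $u_\pm(e)$) counts positive/negative crossings at which $e$ is the over- (resp. under-) strand, and $S(K)=\left|\sum_{i=1}^n s(e_{2i-1})-\sum_{i=1}^n s(e_{2i})\right|$ ($S(K)=0$ if no bars); $S(K)$ is always even, so parity in $\mathbb{Z}_{S(K)}$ is well defined. Segments are the pieces between real crossings and bars. A coloring labels segments by elements of $\mathbb{Z}_{S(K)}$ so that at each real crossing, with $x$ the label of the under-strand segment to the right of the over-strand and $y$ the label of the over-strand segment to the right of the under-strand (right with respect to strand orientations), the other under-segment is labeled $x+1$ and the other over-segment $y+1$, and labels on the two sides of a bar are negatives of each other. In the Gauss diagram of $K$ (a circle with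 one chord per real crossing, with the bars marked as points on the circle), each chord $c$ splits the circle into two arcs; since the total number of bars is even, either both arcs contain an even number of bars ($c\in C_e(K)$) or both contain an odd number ($c\in C_o(K)$). *)

theory Defs
  imports "HOL-Number_Theory.Cong"
begin

text \<open>A (one-component) twisted knot diagram is encoded by its Gauss word with bars:
  a cyclic list of events met while travelling along the oriented knot.
  OverP c / UnderP c: passing real crossing c as over-/under-strand; Bar: passing a bar.
  Virtual crossings are irrelevant and omitted. The sign of crossing c is given by
  sg c (True = positive). Segment j (for j < length w) is the piece of the knot from
  event j to event (j+1) mod (length w); i.e. seg_out j = j, seg_in j = j-1 cyclically.\<close>

datatype ev = Bar | OverP nat | UnderP nat

definition wf_twisted :: "ev list \<Rightarrow> bool" where
  "wf_twisted w \<longleftrightarrow> (\<forall>c. count_list w (OverP c) = count_list w (UnderP c) \<and> count_list w (OverP c) \<le> 1)"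

definition nbars :: "ev list \<Rightarrow> nat" where
  "nbars w = count_list w Bar"

definition seg_in :: "ev list \<Rightarrow> nat \<Rightarrow> nat" where
  "seg_in w j = (j + length w - 1) mod length w"

definition bars_before :: "ev list \<Rightarrow> nat \<Rightarrow> nat" where
  "bars_before w j = count_list (take j w) Bar"

text \<open>Edges e_1..e_2n: the edge after the k-th bar is e_k; the wrap-around edge is e_2n.\<close>
definition edge_of :: "ev list \<Rightarrow> nat \<Rightarrow> nat" where
  "edge_of w j = (if bars_before w j = 0 then nbars w else bars_before w j)"

text \<open>Contribution of a passage to s(e) = u_+ + o_- - u_- - o_+.\<close>
definition passage_val :: "(nat \<Rightarrow> bool) \<Rightarrow> ev \<Rightarrow> int" where
  "passage_val sg e = (case e of Bar \<Rightarrow> 0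
      | OverP c \<Rightarrow> (if sg c then -1 else 1)
      | UnderP c \<Rightarrow> (if sg c then 1 else -1))"

definition s_edge :: "ev list \<Rightarrow> (nat \<Rightarrow> bool) \<Rightarrow> nat \<Rightarrow> int" where
  "s_edge w sg e = (\<Sum>j\<in>{j. j < length w \<and> w ! j \<noteq> Bar \<and> edge_of w j = e}. passage_val sg (w ! j))"

definition S_inv :: "ev list \<Rightarrow> (nat \<Rightarrow> bool) \<Rightarrow> int" where
  "S_inv w sg = (if nbars w = 0 then 0 else
     \<bar>(\<Sum>i\<in>{1..nbars w div 2}. s_edge w sg (2*i - 1)) - (\<Sum>i\<in>{1..nbars w div 2}. s_edge w sg (2*i))\<bar>)"

text \<open>Labels are integers read modulo S (congruence mod 0 is equality).
  At crossing c with over passage at p and under passage at q: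
  positive: x = under incoming, y = over outgoing; negative: x = under outgoing,
  y = over incoming.\<close>
definition coloring :: "ev list \<Rightarrow> (nat \<Rightarrow> bool) \<Rightarrow> (nat \<Rightarrow> int) \<Rightarrow> bool" where
  "coloring w sg F \<longleftrightarrow>
     (\<forall>j<length w. w ! j = Bar \<longrightarrow> [F j = - F (seg_in w j)] (mod S_inv w sg)) \<and>
     (\<forall>c p q. p < length w \<longrightarrow> q < length w \<longrightarrow> w ! p = OverP c \<longrightarrow> w ! q = UnderP c \<longrightarrow>
        (if sg c then
           [F q = F (seg_in w q) + 1] (mod S_inv w sg) \<and> [F (seg_in w p) = F p + 1] (mod S_inv w sg)
         else
           [F (seg_in w q) = F q + 1] (mod S_inv w sg) \<and> [F p = F (seg_in w p) + 1] (mod S_inv w sg)))"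

text \<open>Ind_F(c) = y - x in Z_S, for crossing c with over passage p and under passage q.\<close>
definition ind :: "ev list \<Rightarrow> (nat \<Rightarrow> bool) \<Rightarrow> (nat \<Rightarrow> int) \<Rightarrow> nat \<Rightarrow> nat \<Rightarrow> nat \<Rightarrow> int" where
  "ind w sg F c p q = (if sg c then F p - F (seg_in w q) else F (seg_in w p) - F q) mod S_inv w sg"

definition bars_between :: "ev list \<Rightarrow> nat \<Rightarrow> nat \<Rightarrow> nat" where
  "bars_between w p q = card {j. min p q < j \<and> j < max p q \<and> j < length w \<and> w ! j = Bar}"

definition C_e :: "ev list \<Rightarrow> nat set" where
  "C_e w = {c. \<exists>p q. p < length w \<and> q < length w \<and> w ! p = OverP c \<and> w ! q = UnderP c \<and> even (bars_between w p q)}"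

definition C_o :: "ev list \<Rightarrow> nat set" where
  "C_o w = {c. \<exists>p q. p < length w \<and> q < length w \<and> w ! p = OverP c \<and> w ! q = UnderP c \<and> odd (bars_between w p q)}"

end

theory Submission
  imports Defs "HOL-Library.Multiset"
begin

text \<open>Walking along the knot, a coloring negates its label at every bar and, at every crossing
  passage, shifts it by exactly that passage's contribution to \<open>s(e)\<close>. So a coloring is determined
  by the label \<open>x\<close> of one segment: every segment carries \<open>\<plusminus>x\<close> plus a constant, the sign being
  \<open>(-1)\<close> to the number of bars passed. Going once around returns \<open>x + T\<close>, where \<open>T\<close> is the sum of
  the passage contributions weighted by these signs; as the sign only depends on the parity of
  the edge, \<open>T = \<plusminus>(\<Sum> s(e\<^sub>o\<^sub>d\<^sub>d) - \<Sum> s(e\<^sub>e\<^sub>v\<^sub>e\<^sub>n))\<close>, which vanishes modulo \<open>S(K)\<close>.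
  Hence every \<open>x\<close> extends to a coloring, and \<open>Ind\<^sub>F(c) = \<alpha> x + C\<close> with \<open>\<alpha>\<close> the difference of
  the signs at the over- and the under-passage of \<open>c\<close>: \<open>\<alpha> = 0\<close> for \<open>c \<in> C\<^sub>e(K)\<close> and \<open>\<alpha> = \<plusminus>2\<close>
  for \<open>c \<in> C\<^sub>o(K)\<close>.\<close>

fun swap_role :: "ev \<Rightarrow> ev" where
  "swap_role Bar = Bar" | "swap_role (OverP c) = UnderP c" | "swap_role (UnderP c) = OverP c"

lemma swap_role_swap_role [simp]: "swap_role (swap_role e) = e"
  by (cases e) auto

lemma passage_val_swap_role: "passage_val sg (swap_role e) = - passage_val sg e"
  by (cases e) (auto simp: passage_val_def)

lemma mset_map_swap_role:
  assumes "wf_twisted w"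
  shows "mset (map swap_role w) = mset w"
proof (rule multiset_eqI)
  fix e
  have "swap_role -` {e} = {swap_role e}"
    by (metis swap_role_swap_role vimage_singleton_eq singleton_iff subsetI subset_antisym)
  moreover have "count_list w (swap_role e) = count_list w e"
    using assms by (cases e) (auto simp: wf_twisted_def)
  ultimately show "count (mset (map swap_role w)) e = count (mset w) e"
    by (cases "swap_role e \<in> set w") (auto simp: count_image_mset count_mset count_list_0_iff)
qed

lemma sum_list_passage_val_eq_0:
  assumes "wf_twisted w"
  shows "sum_list (map (passage_val sg) w) = 0"
proof -
  have "sum_list (map (passage_val sg) w) = sum_list (map (passage_val sg) (map swap_role w))"
    by (metis mset_map mset_map_swap_role[OF assms] sum_mset_sum_list)
  also have "\<dots> = - sum_list (map (passage_val sg) w)"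
    by (simp add: uminus_sum_list_map comp_def passage_val_swap_role)
  finally show ?thesis by simp
qed

lemma passage_unique:
  assumes "wf_twisted w" "i < length w" "j < length w" "w ! i = w ! j" "w ! i \<noteq> Bar"
  shows "i = j"
proof (rule ccontr)
  assume "i \<noteq> j"
  have "count_list w (OverP c) \<le> 1 \<and> count_list w (UnderP c) \<le> 1" for c
    using assms(1) by (metis wf_twisted_def)
  then have "count_list w (w ! i) \<le> 1"
    using assms(5) by (cases "w ! i") auto
  moreover have "{i, j} \<subseteq> {k. k < length w \<and> w ! k = w ! i}"
    using assms(2-4) by auto
  then have "card {i, j} \<le> count_list w (w ! i)"
    by (simp add: count_list_eq_length_filter length_filter_conv_card eq_commute card_mono)
  ultimately show False using \<open>i \<noteq> j\<close> by simp
qed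

lemma OverP_in_set_iff_UnderP_in_set:
  "wf_twisted w \<Longrightarrow> OverP c \<in> set w \<longleftrightarrow> UnderP c \<in> set w"
  by (metis count_list_0_iff wf_twisted_def)

lemma bars_before_Suc:
  "j < length w \<Longrightarrow> bars_before w (Suc j) = bars_before w j + (if w ! j = Bar then 1 else 0)"
  by (simp add: bars_before_def take_Suc_conv_app_nth)

lemma bars_before_0 [simp]: "bars_before w 0 = 0"
  by (simp add: bars_before_def)

lemma bars_before_length [simp]: "bars_before w (length w) = nbars w"
  by (simp add: bars_before_def nbars_def)

lemma bars_before_le_nbars: "bars_before w j \<le> nbars w"
  unfolding bars_before_def nbars_def
  by (metis append_take_drop_id count_list_append le_add1)

lemma bars_before_add_card:
  assumes "a \<le> b" "b \<le> length w"
  shows "bars_before w b = bars_before w a + card {j. a \<le> j \<and> j < b \<and> w ! j = Bar}"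
  using assms
proof (induction b rule: dec_induct)
  case base
  then show ?case by simp
next
  case (step n)
  have "{j. a \<le> j \<and> j < Suc n \<and> w ! j = Bar} =
        {j. a \<le> j \<and> j < n \<and> w ! j = Bar} \<union> (if w ! n = Bar then {n} else {})"
    using step.hyps by (auto simp: less_Suc_eq)
  then show ?case using step by (simp add: bars_before_Suc)
qed

lemma bars_before_eq_add_bars_between:
  assumes "a \<le> b" "b < length w" "w ! a \<noteq> Bar"
  shows "bars_before w b = bars_before w a + bars_between w a b"
proof -
  have "{j. a \<le> j \<and> j < b \<and> w ! j = Bar} = {j. a < j \<and> j < b \<and> j < length w \<and> w ! j = Bar}"
    using assms by (auto simp: order.order_iff_strict)
  then show ?thesis
    using bars_before_add_card[OF assms(1)] assms(1,2) by (simp add: bars_between_def)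
qed

lemma bars_between_commute: "bars_between w p q = bars_between w q p"
  by (simp add: bars_between_def min.commute max.commute)

lemma neg_one_power_bars_before_passages:
  assumes "p < length w" "q < length w" "w ! p \<noteq> Bar" "w ! q \<noteq> Bar"
  shows "(-1::int) ^ bars_before w p = (-1) ^ bars_between w p q * (-1) ^ bars_before w q"
proof (cases "p \<le> q")
  case True
  then show ?thesis
    using bars_before_eq_add_bars_between[of p q w] assms by (simp add: power_add)
next
  case False
  then show ?thesis
    using bars_before_eq_add_bars_between[of q p w] assms
    by (simp add: power_add bars_between_commute)
qed

lemma seg_in_0: "w \<noteq> [] \<Longrightarrow> seg_in w 0 = length w - 1"
  by (simp add: seg_in_def)

lemma seg_in_Suc: "Suc j < length w \<Longrightarrow> seg_in w (Suc j) = j"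
  by (simp add: seg_in_def)

lemma seg_in_less: "w \<noteq> [] \<Longrightarrow> seg_in w j < length w"
  by (simp add: seg_in_def)

lemma neg_one_power_bars_before_Suc_seg_in:
  assumes "even (nbars w)" "j < length w"
  shows "(-1::int) ^ bars_before w (Suc (seg_in w j)) = (-1) ^ bars_before w j"
proof (cases j)
  case 0
  then show ?thesis using assms by (simp add: seg_in_0)
next
  case (Suc k)
  then show ?thesis using assms by (simp add: seg_in_Suc)
qed

definition transfer :: "(nat \<Rightarrow> bool) \<Rightarrow> ev \<Rightarrow> int \<Rightarrow> int" where
  "transfer sg e v = (case e of Bar \<Rightarrow> - v | _ \<Rightarrow> v + passage_val sg e)"

lemma transfer_Bar [simp]: "transfer sg Bar v = - v"
  by (simp add: transfer_def)

lemma transfer_passage: "e \<noteq> Bar \<Longrightarrow> transfer sg e v = v + passage_val sg e"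
  by (cases e) (auto simp: transfer_def)

lemma transfer_cong: "[a = b] (mod m) \<Longrightarrow> [transfer sg e a = transfer sg e b] (mod m)"
  by (cases e) (auto simp: transfer_def cong_minus_minus_iff intro: cong_add)

text \<open>\<open>propagate w sg x j\<close> is the label forced on segment \<open>j\<close> when segment \<open>length w - 1\<close>,
  the one entering event \<open>0\<close>, carries \<open>x\<close>.\<close>

fun propagate :: "ev list \<Rightarrow> (nat \<Rightarrow> bool) \<Rightarrow> int \<Rightarrow> nat \<Rightarrow> int" where
  "propagate w sg x 0 = transfer sg (w ! 0) x"
| "propagate w sg x (Suc j) = transfer sg (w ! Suc j) (propagate w sg x j)"

definition twisted_sum :: "ev list \<Rightarrow> (nat \<Rightarrow> bool) \<Rightarrow> nat \<Rightarrow> int" where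
  "twisted_sum w sg n = (\<Sum>i<n. (-1) ^ bars_before w i * passage_val sg (w ! i))"

lemma propagate_eq:
  "j < length w \<Longrightarrow>
    propagate w sg x j = (-1) ^ bars_before w (Suc j) * (x + twisted_sum w sg (Suc j))"
proof (induction j)
  case 0
  then show ?case
    by (cases "w ! 0 = Bar") (auto simp: bars_before_Suc transfer_passage twisted_sum_def passage_val_def)
next
  case (Suc j)
  then show ?case
    by (cases "w ! Suc j = Bar")
      (auto simp: bars_before_Suc[of "Suc j"] transfer_passage twisted_sum_def passage_val_def algebra_simps)
qed

lemma propagate_affine:
  "j < length w \<Longrightarrow> propagate w sg x j = (-1) ^ bars_before w (Suc j) * x + propagate w sg 0 j"
  by (simp add: propagate_eq algebra_simps)

lemma propagate_last:
  assumes "even (nbars w)" "w \<noteq> []"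
  shows "propagate w sg x (length w - 1) = x + twisted_sum w sg (length w)"
  using assms propagate_eq[of "length w - 1" w sg x] by simp

lemma sum_alternating_pairs:
  "(\<Sum>k=1..2*n. (-1::int) ^ k * f k) = (\<Sum>i=1..n. f (2*i)) - (\<Sum>i=1..n. f (2*i - 1))"
proof (induction n)
  case (Suc n)
  have "{1..2 * Suc n} = insert (Suc (Suc (2*n))) (insert (Suc (2*n)) {1..2*n})" by auto
  then show ?case using Suc by simp
qed simp

lemma twisted_sum_eq_alternating_s_edge:
  assumes "even (nbars w)" "nbars w \<noteq> 0"
  shows "twisted_sum w sg (length w) = (\<Sum>k=1..nbars w. (-1) ^ k * s_edge w sg k)"
proof -
  let ?P = "{i. i < length w \<and> w ! i \<noteq> Bar}"
  let ?f = "\<lambda>i. (-1::int) ^ edge_of w i * passage_val sg (w ! i)"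
  \<comment> \<open>the wrap-around edge \<open>e\<^sub>2\<^sub>n\<close> also contains the passages before the first bar\<close>
  have "(-1::int) ^ bars_before w i = (-1) ^ edge_of w i" for i
    using assms(1) by (simp add: edge_of_def)
  then have "twisted_sum w sg (length w) = (\<Sum>i<length w. ?f i)"
    by (simp add: twisted_sum_def)
  also have "\<dots> = (\<Sum>i\<in>?P. ?f i)"
    by (rule sum.mono_neutral_right) (auto simp: passage_val_def)
  also have "\<dots> = (\<Sum>k=1..nbars w. \<Sum>i\<in>{i\<in>?P. edge_of w i = k}. ?f i)"
    using assms(2) bars_before_le_nbars[of w]
    by (intro sum.group[symmetric]) (auto simp: edge_of_def)
  also have "\<dots> = (\<Sum>k=1..nbars w. (-1) ^ k * s_edge w sg k)"
    by (intro sum.cong refl) (auto simp: s_edge_def sum_distrib_left intro!: sum.cong)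
  finally show ?thesis .
qed

lemma S_inv_dvd_twisted_sum:
  assumes "wf_twisted w" "even (nbars w)"
  shows "S_inv w sg dvd twisted_sum w sg (length w)"
proof (cases "nbars w = 0")
  case True
  then have "twisted_sum w sg (length w) = sum_list (map (passage_val sg) w)"
    using bars_before_le_nbars[of w]
    by (simp add: twisted_sum_def sum_list_sum_nth atLeast0LessThan)
  then show ?thesis using sum_list_passage_val_eq_0[OF assms(1)] by simp
next
  case False
  let ?m = "nbars w div 2"
  have "twisted_sum w sg (length w) =
      - ((\<Sum>i=1..?m. s_edge w sg (2*i - 1)) - (\<Sum>i=1..?m. s_edge w sg (2*i)))"
    using twisted_sum_eq_alternating_s_edge[OF assms(2) False]
      sum_alternating_pairs[where n = ?m and f = "s_edge w sg"] assms(2) by simp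
  then show ?thesis using False by (simp only: S_inv_def abs_dvd_iff dvd_minus_iff if_False dvd_refl)
qed

lemma cong_add_iff_cong_add_uminus: "[a = b + k] (mod m) \<longleftrightarrow> [b = a + - k] (mod (m::int))"
  by (metis cong_add_rcancel cong_sym_eq diff_add_cancel diff_minus_eq_add)

lemma coloring_iff_transfer:
  assumes "wf_twisted w"
  shows "coloring w sg F \<longleftrightarrow>
    (\<forall>j<length w. [F j = transfer sg (w ! j) (F (seg_in w j))] (mod S_inv w sg))"
    (is "_ \<longleftrightarrow> ?transfer")
proof
  assume col: "coloring w sg F"
  show ?transfer
  proof (intro allI impI)
    fix j assume j: "j < length w"
    show "[F j = transfer sg (w ! j) (F (seg_in w j))] (mod S_inv w sg)"
    proof (cases "w ! j")
      case Bar
      then show ?thesis using col j by (simp add: coloring_def)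
    next
      case (OverP c)
      then have "UnderP c \<in> set w"
        using OverP_in_set_iff_UnderP_in_set[OF assms] j by (metis nth_mem)
      then obtain q where "q < length w" "w ! q = UnderP c" by (auto simp: in_set_conv_nth)
      then show ?thesis using col j OverP
        by (auto simp: coloring_def transfer_def passage_val_def cong_add_iff_cong_add_uminus
            split: if_splits)
    next
      case (UnderP c)
      then have "OverP c \<in> set w"
        using OverP_in_set_iff_UnderP_in_set[OF assms] j by (metis nth_mem)
      then obtain p where "p < length w" "w ! p = OverP c" by (auto simp: in_set_conv_nth)
      then show ?thesis using col j UnderP
        by (auto simp: coloring_def transfer_def passage_val_def cong_add_iff_cong_add_uminus
            split: if_splits)
    qed
  qed
next
  assume transfer: ?transfer
  show "coloring w sg F" unfolding coloring_def
  proof (intro conjI allI impI)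
    fix j assume "j < length w" "w ! j = Bar"
    then show "[F j = - F (seg_in w j)] (mod S_inv w sg)" using transfer by force
  next
    fix c p q assume pq: "p < length w" "q < length w" "w ! p = OverP c" "w ! q = UnderP c"
    then have "[F p = F (seg_in w p) + passage_val sg (OverP c)] (mod S_inv w sg)"
      "[F q = F (seg_in w q) + passage_val sg (UnderP c)] (mod S_inv w sg)"
      using transfer by (force simp: transfer_def)+
    then show "if sg c
      then [F q = F (seg_in w q) + 1] (mod S_inv w sg) \<and> [F (seg_in w p) = F p + 1] (mod S_inv w sg)
      else [F (seg_in w q) = F q + 1] (mod S_inv w sg) \<and> [F p = F (seg_in w p) + 1] (mod S_inv w sg)"
      by (auto simp: passage_val_def cong_add_iff_cong_add_uminus)
  qed
qed

lemma coloring_propagate: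
  assumes "wf_twisted w" "even (nbars w)" "w \<noteq> []"
  shows "coloring w sg (propagate w sg x)"
  unfolding coloring_iff_transfer[OF assms(1)]
proof (intro allI impI)
  fix j assume j: "j < length w"
  show "[propagate w sg x j = transfer sg (w ! j) (propagate w sg x (seg_in w j))] (mod S_inv w sg)"
  proof (cases j)
    case 0
    have "[x = propagate w sg x (length w - 1)] (mod S_inv w sg)"
      using propagate_last[OF assms(2,3)] S_inv_dvd_twisted_sum[OF assms(1,2)]
      by (simp add: cong_iff_dvd_diff)
    then show ?thesis using 0 assms(3) by (simp add: seg_in_0 transfer_cong)
  next
    case (Suc k)
    then show ?thesis using j by (simp add: seg_in_Suc)
  qed
qed

lemma coloring_cong_propagate:
  assumes "wf_twisted w" and col: "coloring w sg F"
  shows "j < length w \<Longrightarrow> [F j = propagate w sg (F (length w - 1)) j] (mod S_inv w sg)"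
proof (induction j)
  case 0
  then show ?case
    using col coloring_iff_transfer[OF assms(1)] by (fastforce simp: seg_in_0)
next
  case (Suc j)
  have "[F (Suc j) = transfer sg (w ! Suc j) (F j)] (mod S_inv w sg)"
    using col Suc.prems coloring_iff_transfer[OF assms(1)] seg_in_Suc[OF Suc.prems] by metis
  moreover have "[transfer sg (w ! Suc j) (F j) =
      transfer sg (w ! Suc j) (propagate w sg (F (length w - 1)) j)] (mod S_inv w sg)"
    using Suc by (intro transfer_cong) simp
  ultimately show ?case by (simp add: cong_trans)
qed

lemma ind_cong:
  assumes "p < length w" "q < length w"
    and "\<forall>j<length w. [F j = G j] (mod S_inv w sg)"
  shows "ind w sg F c p q = ind w sg G c p q"
proof -
  have "w \<noteq> []" using assms(1) by auto
  then have "seg_in w p < length w" "seg_in w q < length w"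
    by (simp_all add: seg_in_less)
  then show ?thesis
    using assms by (auto simp: ind_def cong_def intro!: mod_diff_cong)
qed

definition ind_slope :: "ev list \<Rightarrow> nat \<Rightarrow> nat \<Rightarrow> int" where
  "ind_slope w p q = (-1) ^ bars_before w p - (-1) ^ bars_before w q"

lemma ind_slope_eq:
  assumes "p < length w" "q < length w" "w ! p \<noteq> Bar" "w ! q \<noteq> Bar"
  shows "ind_slope w p q = (if even (bars_between w p q) then 0 else - 2 * (-1) ^ bars_before w q)"
  using neg_one_power_bars_before_passages[OF assms] by (simp add: ind_slope_def)

lemma ind_propagate:
  assumes "even (nbars w)" "p < length w" "q < length w" "w ! p \<noteq> Bar" "w ! q \<noteq> Bar"
  shows "ind w sg (propagate w sg x) c p q =
    (ind_slope w p q * x + ind w sg (propagate w sg 0) c p q) mod S_inv w sg"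
proof -
  have passage: "propagate w sg x j = (-1) ^ bars_before w j * x + propagate w sg 0 j"
    if "j < length w" "w ! j \<noteq> Bar" for j
    using propagate_affine[of j w sg x] that by (simp add: bars_before_Suc)
  have incoming:
    "propagate w sg x (seg_in w j) = (-1) ^ bars_before w j * x + propagate w sg 0 (seg_in w j)"
    if "j < length w" for j
  proof -
    have "seg_in w j < length w" using that seg_in_less[of w j] by force
    then show ?thesis
      using propagate_affine[of "seg_in w j" w sg x]
        neg_one_power_bars_before_Suc_seg_in[OF assms(1) that]
      by simp
  qed
  let ?ind0 = "\<lambda>j k. propagate w sg 0 j - propagate w sg 0 k"
  have "ind w sg (propagate w sg x) c p q = (ind_slope w p q * x +
      (if sg c then ?ind0 p (seg_in w q) else ?ind0 (seg_in w p) q)) mod S_inv w sg"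
    using passage[OF assms(2,4)] passage[OF assms(3,5)] incoming[OF assms(2)] incoming[OF assms(3)]
    by (simp add: ind_def ind_slope_def algebra_simps)
  also have "\<dots> = (ind_slope w p q * x + ind w sg (propagate w sg 0) c p q) mod S_inv w sg"
    by (simp add: ind_def mod_add_right_eq)
  finally show ?thesis .
qed

lemma ind_coloring:
  assumes "wf_twisted w" "even (nbars w)"
    and "p < length w" "q < length w" "w ! p \<noteq> Bar" "w ! q \<noteq> Bar"
    and "coloring w sg F"
  shows "ind w sg F c p q =
    (ind_slope w p q * F (length w - 1) + ind w sg (propagate w sg 0) c p q) mod S_inv w sg"
proof -
  have "ind w sg F c p q = ind w sg (propagate w sg (F (length w - 1))) c p q"
    using coloring_cong_propagate[OF assms(1,7)] by (intro ind_cong[OF assms(3,4)]) blast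
  also have "\<dots> =
      (ind_slope w p q * F (length w - 1) + ind w sg (propagate w sg 0) c p q) mod S_inv w sg"
    by (rule ind_propagate[OF assms(2-6)])
  finally show ?thesis .
qed

lemma ind_range:
  assumes "wf_twisted w" "even (nbars w)"
    and "p < length w" "q < length w" "w ! p \<noteq> Bar" "w ! q \<noteq> Bar"
  shows "{ind w sg F c p q | F. coloring w sg F} =
    {(ind_slope w p q * x + ind w sg (propagate w sg 0) c p q) mod S_inv w sg | x. True}"
proof -
  have "w \<noteq> []" using assms(3) by auto
  show ?thesis
  proof (intro equalityI subsetI)
    fix y assume "y \<in> {ind w sg F c p q | F. coloring w sg F}"
    then show "y \<in> {(ind_slope w p q * x + ind w sg (propagate w sg 0) c p q) mod S_inv w sg | x. True}"
      using ind_coloring[OF assms] by blast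
  next
    fix y
    assume "y \<in> {(ind_slope w p q * x + ind w sg (propagate w sg 0) c p q) mod S_inv w sg | x. True}"
    then obtain x
      where "y = (ind_slope w p q * x + ind w sg (propagate w sg 0) c p q) mod S_inv w sg"
      by blast
    then have "y = ind w sg (propagate w sg x) c p q"
      using ind_propagate[OF assms(2-6), where x = x] by simp
    then show "y \<in> {ind w sg F c p q | F. coloring w sg F}"
      using coloring_propagate[OF assms(1,2) \<open>w \<noteq> []\<close>] by blast
  qed
qed

lemma range_affine_mod_of_slope_two:
  fixes a b m :: int
  assumes "a = 2 \<or> a = -2"
  shows "{(a * x + b) mod m | x. True} = {r mod m | r. even r \<longleftrightarrow> even b}"
proof (intro equalityI subsetI)
  fix y assume "y \<in> {(a * x + b) mod m | x. True}"
  moreover have "even (a * x + b) \<longleftrightarrow> even b" for x using assms by auto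
  ultimately show "y \<in> {r mod m | r. even r \<longleftrightarrow> even b}" by blast
next
  fix y assume "y \<in> {r mod m | r. even r \<longleftrightarrow> even b}"
  then obtain r where r: "y = r mod m" "even r \<longleftrightarrow> even b" by blast
  then have "even (r - b)" by simp
  then obtain k where "r - b = 2 * k" by (rule evenE)
  then have "r = a * (if a = 2 then k else - k) + b" using assms by auto
  then show "y \<in> {(a * x + b) mod m | x. True}" using r by blast
qed

theorem lemma7p7:
  fixes w :: "ev list" and sg :: "nat \<Rightarrow> bool" and c p q :: nat
  assumes "wf_twisted w" and "even (nbars w)"
    and "p < length w" and "q < length w" and "w ! p = OverP c" and "w ! q = UnderP c"
  shows "(c \<in> C_e w \<longrightarrow>
            (\<forall>F G. coloring w sg F \<longrightarrow> coloring w sg G \<longrightarrow> ind w sg F c p q = ind w sg G c p q))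
       \<and> (c \<in> C_o w \<longrightarrow>
            ({ind w sg F c p q | F. coloring w sg F} = {r mod S_inv w sg | r. even r}
           \<or> {ind w sg F c p q | F. coloring w sg F} = {r mod S_inv w sg | r. odd r}))"
proof -
  have passages: "w ! p \<noteq> Bar" "w ! q \<noteq> Bar" using assms(5,6) by auto
  have "p' = p \<and> q' = q"
    if "p' < length w" "q' < length w" "w ! p' = OverP c" "w ! q' = UnderP c" for p' q'
    using that assms(3-6) passage_unique[OF assms(1)] by (metis ev.distinct(1,3))
  then have parity: "c \<in> C_e w \<Longrightarrow> even (bars_between w p q)"
    "c \<in> C_o w \<Longrightarrow> odd (bars_between w p q)"
    by (auto simp: C_e_def C_o_def)
  note slope = ind_slope_eq[OF assms(3,4) passages]
  let ?C = "ind w sg (propagate w sg 0) c p q"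
  show ?thesis
  proof (intro conjI impI allI)
    fix F G assume "c \<in> C_e w" "coloring w sg F" "coloring w sg G"
    then show "ind w sg F c p q = ind w sg G c p q"
      using parity(1) slope ind_coloring[OF assms(1-4) passages, of sg F]
        ind_coloring[OF assms(1-4) passages, of sg G]
      by simp
  next
    assume "c \<in> C_o w"
    then have "ind_slope w p q = 2 \<or> ind_slope w p q = -2"
      using parity(2) slope by (simp add: minus_one_power_iff)
    from range_affine_mod_of_slope_two[OF this]
    have "{ind w sg F c p q | F. coloring w sg F} =
        {r mod S_inv w sg | r. even r \<longleftrightarrow> even ?C}"
      using ind_range[OF assms(1-4) passages] by simp
    then show "{ind w sg F c p q | F. coloring w sg F} = {r mod S_inv w sg | r. even r}
        \<or> {ind w sg F c p q | F. coloring w sg F} = {r mod S_inv w sg | r. odd r}"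
      by (cases "even ?C") simp_all
  qed
qed

end
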